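(* Let $V:\mathbb{Z}^d\to\mathbb{R}^+\cup\{+\infty\}$ be a strictly convex potential with $V(\vec0)=0$. If $\rho(V,\alpha)<\rho_0$, then $\beta(V,\alpha)<1$. In particular, $$\alpha^*(V)\le\inf\{\alpha>0:\rho(V,\alpha)\le\rho_0\}.$$
   Context: $\rho(V,\alpha)=\sum_{x\in\mathbb{Z}^d\setminus\{\vec0\}}e^{-\alpha V(x)}$; $\rho_0\approx0.44504$ is the unique solution $r\in[0,1]$ of $\frac{r}{(1-r)^2}-r=1$. $\Gamma$ is the set of finite cycles of $\mathbb{Z}^d$ (a cycle of length $|\gamma|=n\ge2$ on distinct sites $x_1,\dots,x_n$ maps $x_i\mapsto x_{i+1}$ mod $n$ and fixes other sites; support $\{\gamma\}$); $w(\gamma)=\exp\{-\alpha\sum_{x\in\{\gamma\}}V(\gamma(x)-x)\}$; $\beta(V,\alpha)=\sum_{\gamma\in\Gamma,\vec0\in\{\gamma\}}|\gamma|w(\gamma)$; $\alpha^*(V)=\inf\{\alpha:\beta(V,\alpha)<1\}$ (and $\alpha^*=\infty$ if $\beta(V,\alpha)=\infty$ for all $\alpha$). *)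

theory Defs
  imports "HOL-Analysis.Analysis" "HOL-Library.Extended_Nonnegative_Real"
begin

text \<open>Lattice Z^d is modelled as int^'d (d = CARD('d)); potentials take values in [0,+oo] (ennreal).\<close>

definition lat_real :: "int^'d \<Rightarrow> real^'d" where
  "lat_real x = (\<chi> i. real_of_int (x $ i))"

definition strictly_convex_pot :: "(int^'d \<Rightarrow> ennreal) \<Rightarrow> bool" where
  "strictly_convex_pot V \<longleftrightarrow>
     (\<forall>x y z. \<forall>t::real. x \<noteq> y \<and> 0 < t \<and> t < 1 \<and>
        lat_real z = t *\<^sub>R lat_real x + (1 - t) *\<^sub>R lat_real y \<longrightarrow>
          V z \<le> ennreal t * V x + ennreal (1 - t) * V y \<and>
          (V x < \<infinity> \<and> V y < \<infinity> \<longrightarrow> V z < ennreal t * V x + ennreal (1 - t) * V y))"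

definition expw :: "real \<Rightarrow> ennreal \<Rightarrow> real" where
  "expw \<alpha> v = (if v = \<infinity> then 0 else exp (- \<alpha> * enn2real v))"

definition rho :: "(int^'d \<Rightarrow> ennreal) \<Rightarrow> real \<Rightarrow> ennreal" where
  "rho V \<alpha> = (\<Sum>\<^sub>\<infinity> x \<in> - {0}. ennreal (expw \<alpha> (V x)))"

definition rho0 :: real where
  "rho0 = (THE r. 0 \<le> r \<and> r \<le> 1 \<and> r / (1 - r)^2 - r = 1)"

text \<open>The cycle on the distinct sites xs = [x_1,...,x_n]: x_i maps to x_{i+1 mod n}, others fixed.\<close>
definition cyc :: "'a list \<Rightarrow> 'a \<Rightarrow> 'a" where
  "cyc xs x = (if x \<in> set xs
      then xs ! ((Suc (THE i. i < length xs \<and> xs ! i = x)) mod length xs) else x)"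

definition cycles :: "(int^'d \<Rightarrow> int^'d) set" where
  "cycles = {\<gamma>. \<exists>xs. distinct xs \<and> 2 \<le> length xs \<and> \<gamma> = cyc xs}"

definition supp :: "('a \<Rightarrow> 'a) \<Rightarrow> 'a set" where
  "supp \<gamma> = {x. \<gamma> x \<noteq> x}"

definition cyc_weight :: "(int^'d \<Rightarrow> ennreal) \<Rightarrow> real \<Rightarrow> (int^'d \<Rightarrow> int^'d) \<Rightarrow> real" where
  "cyc_weight V \<alpha> \<gamma> = (\<Prod>x\<in>supp \<gamma>. expw \<alpha> (V (\<gamma> x - x)))"

definition beta :: "(int^'d \<Rightarrow> ennreal) \<Rightarrow> real \<Rightarrow> ennreal" where
  "beta V \<alpha> = (\<Sum>\<^sub>\<infinity> \<gamma> \<in> {\<gamma> \<in> cycles. 0 \<in> supp \<gamma>}.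
                   ennreal (real (card (supp \<gamma>)) * cyc_weight V \<alpha> \<gamma>))"

text \<open>alpha*(V) = inf{alpha > 0 : beta(V,alpha) < 1}, = +oo if the set is empty.\<close>
definition alpha_star :: "(int^'d \<Rightarrow> ennreal) \<Rightarrow> ereal" where
  "alpha_star V = Inf (ereal ` {\<alpha>. 0 < \<alpha> \<and> beta V \<alpha> < 1})"

end

theory Submission
  imports Defs
begin

text \<open>Listing the orbit of the origin under a cycle \<gamma> through 0 gives the sequence of its
  n = |\<gamma>| nonzero jumps \<gamma> x - x; their partial sums recover the orbit, so the jump sequence
  determines \<gamma>. Summing the product weights over all jump sequences of length n gives at most
  \<rho>^n, hence \<beta> \<le> (sum over n \<ge> 2 of n \<rho>^n) = \<rho>/(1-\<rho>)^2 - \<rho>, which is < 1 exactly when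
  \<rho> < rho0. For the bound on
  alpha_star: \<rho>(V,\<alpha>) is strictly decreasing in \<alpha> as long as 0 < \<rho> < 1, so \<rho>(V,\<alpha>) \<le> rho0
  forces \<rho>(V,\<alpha>') < rho0, hence \<beta>(V,\<alpha>') < 1, for every \<alpha>' > \<alpha>.\<close>

definition moment_tail :: "real \<Rightarrow> real" where
  "moment_tail r = r / (1 - r)^2 - r"

lemma geometric_moment_sums:
  fixes r :: real
  assumes "\<bar>r\<bar> < 1"
  shows "(\<lambda>n. real n * r ^ n) sums (r / (1 - r)^2)"
proof -
  have "(\<lambda>n. r * (real (Suc n) * r ^ n)) sums (r * (1 / (1 - r)^2))"
    using geometric_deriv_sums[of r] assms by (intro sums_mult) simp
  hence "(\<lambda>n. real (Suc n) * r ^ Suc n) sums (r / (1 - r)^2)"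
    by (simp add: algebra_simps)
  thus ?thesis by (subst (asm) sums_Suc_iff) simp
qed

lemma sum_moment_le_moment_tail:
  fixes r :: real
  assumes "0 \<le> r" "r < 1"
  shows "(\<Sum>n\<in>{2..<N}. real n * r ^ n) \<le> moment_tail r"
proof -
  have sums: "(\<lambda>n. real n * r ^ n) sums (r / (1 - r)^2)"
    using assms by (intro geometric_moment_sums) simp
  have "r + (\<Sum>n\<in>{2..<N}. real n * r ^ n) = (\<Sum>n\<in>insert 1 {2..<N}. real n * r ^ n)"
    by simp
  also have "\<dots> \<le> (\<Sum>n. real n * r ^ n)"
    using sums assms by (intro sum_le_suminf) (auto simp: sums_iff)
  also have "\<dots> = r / (1 - r)^2"
    using sums by (simp add: sums_iff)
  finally show ?thesis by (simp add: moment_tail_def)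
qed

lemma moment_tail_strict_mono:
  fixes a b :: real
  assumes "0 \<le> a" "a < b" "b < 1"
  shows "moment_tail a < moment_tail b"
proof -
  have split: "moment_tail r = r^2 / (1 - r) + (r / (1 - r))^2" if "r < 1" for r :: real
    using that unfolding moment_tail_def
    by (simp add: power2_eq_square divide_simps) (simp add: algebra_simps)
  have q: "a / (1 - a) < b / (1 - b)" using assms by (simp add: field_simps)
  have "a^2 / (1 - a) < b^2 / (1 - b)"
    using assms by (intro frac_less power_strict_mono) auto
  moreover have "(a / (1 - a))^2 < (b / (1 - b))^2"
    using q assms by (intro power_strict_mono) auto
  ultimately show ?thesis using split assms by simp
qed

lemma rho0_props: "0 < rho0" "rho0 < 1" "moment_tail rho0 = 1"
proof -
  have "continuous_on {0..1/2} moment_tail"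
    unfolding moment_tail_def by (intro continuous_intros) auto
  moreover have ends: "moment_tail 0 = 0" "moment_tail (1/2) = 3/2"
    by (simp_all add: moment_tail_def power2_eq_square)
  ultimately obtain r where r: "0 \<le> r" "r \<le> 1/2" "moment_tail r = 1"
    using IVT'[of moment_tail 0 1 "1/2"] by force
  have unique: "s = r" if "0 \<le> s" "s \<le> 1" "moment_tail s = 1" for s
  proof -
    have "s \<noteq> 1"
    proof
      assume "s = 1"
      with that(3) show False by (simp add: moment_tail_def)
    qed
    thus ?thesis
      using that r moment_tail_strict_mono[of s r] moment_tail_strict_mono[of r s]
      by (cases s r rule: linorder_cases) simp_all
  qed
  have "rho0 = r"
    unfolding rho0_def
  proof (rule the_equality)
    show "0 \<le> r \<and> r \<le> 1 \<and> r / (1 - r)^2 - r = 1"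
      using r unfolding moment_tail_def by simp
  qed (use unique in \<open>simp add: moment_tail_def\<close>)
  moreover have "r \<noteq> 0" "r \<noteq> 1/2"
    using r(3) ends by (metis zero_neq_one, force)
  ultimately show "0 < rho0" "rho0 < 1" "moment_tail rho0 = 1"
    using r by simp_all
qed

lemma moment_tail_less_1:
  assumes "0 \<le> r" "r < rho0"
  shows "moment_tail r < 1"
  using moment_tail_strict_mono[of r rho0] assms rho0_props by simp

lemma cyc_nth:
  assumes "distinct xs" "k < length xs"
  shows "cyc xs (xs ! k) = xs ! (Suc k mod length xs)"
proof -
  have "(THE i. i < length xs \<and> xs ! i = xs ! k) = k"
    using assms by (intro the_equality) (auto simp: nth_eq_iff_index_eq)
  thus ?thesis using assms by (simp add: cyc_def)
qed

lemma funpow_cyc_nth: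
  assumes "distinct xs" "k < length xs"
  shows "(cyc xs ^^ i) (xs ! k) = xs ! ((k + i) mod length xs)"
proof (induction i)
  case (Suc i)
  have "(cyc xs ^^ Suc i) (xs ! k) = cyc xs (xs ! ((k + i) mod length xs))"
    using Suc by simp
  also have "\<dots> = xs ! ((k + Suc i) mod length xs)"
    using assms by (subst cyc_nth) (auto simp: mod_Suc_eq intro: mod_less_divisor)
  finally show ?case .
qed (use assms in simp)

lemma supp_cyc:
  assumes "distinct xs" "2 \<le> length xs"
  shows "supp (cyc xs) = set xs"
proof
  show "supp (cyc xs) \<subseteq> set xs" by (auto simp: supp_def cyc_def)
next
  show "set xs \<subseteq> supp (cyc xs)"
  proof
    fix x assume "x \<in> set xs"
    then obtain k where k: "k < length xs" "x = xs ! k" by (auto simp: in_set_conv_nth)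
    have "Suc k mod length xs \<noteq> k"
    proof (cases "Suc k < length xs")
      case False
      hence "Suc k = length xs" using k by simp
      hence "Suc k mod length xs = 0" by simp
      moreover have "k \<noteq> 0" using False assms(2) by linarith
      ultimately show ?thesis by simp
    qed simp
    moreover have "Suc k mod length xs < length xs" using k by (intro mod_less_divisor) linarith
    ultimately have "xs ! (Suc k mod length xs) \<noteq> xs ! k"
      using assms k by (simp add: nth_eq_iff_index_eq)
    thus "x \<in> supp (cyc xs)" using cyc_nth[OF assms(1) k(1)] k by (simp add: supp_def)
  qed
qed

lemma bij_betw_funpow_cyc:
  assumes "distinct xs" "a \<in> set xs"
  shows "bij_betw (\<lambda>i. (cyc xs ^^ i) a) {..<length xs} (set xs)"
proof -
  obtain k where k: "k < length xs" "a = xs ! k" using assms(2) by (auto simp: in_set_conv_nth)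
  have "bij_betw ((!) (rotate k xs)) {..<length xs} (set xs)"
    using assms(1) by (intro bij_betw_nth) auto
  moreover have "(cyc xs ^^ i) a = rotate k xs ! i" if "i < length xs" for i
    using k assms(1) that funpow_cyc_nth nth_rotate by metis
  ultimately show ?thesis by (rule bij_betw_cong[THEN iffD2, rotated]) simp
qed

lemma cycle_orbit:
  assumes "\<gamma> \<in> cycles" "a \<in> supp \<gamma>"
  shows "finite (supp \<gamma>)" "2 \<le> card (supp \<gamma>)"
    and "bij_betw (\<lambda>i. (\<gamma> ^^ i) a) {..<card (supp \<gamma>)} (supp \<gamma>)"
proof -
  obtain xs where xs: "distinct xs" "2 \<le> length xs" "\<gamma> = cyc xs"
    using assms(1) by (auto simp: cycles_def)
  have "supp \<gamma> = set xs" using xs supp_cyc by simp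
  moreover have "card (set xs) = length xs" using xs(1) by (rule distinct_card)
  ultimately
  show "finite (supp \<gamma>)" "2 \<le> card (supp \<gamma>)"
    and "bij_betw (\<lambda>i. (\<gamma> ^^ i) a) {..<card (supp \<gamma>)} (supp \<gamma>)"
    using xs assms(2) bij_betw_funpow_cyc by auto
qed

definition displacements :: "('a::ab_group_add \<Rightarrow> 'a) \<Rightarrow> nat \<Rightarrow> 'a" where
  "displacements \<gamma> = (\<lambda>i\<in>{..<card (supp \<gamma>)}. (\<gamma> ^^ Suc i) 0 - (\<gamma> ^^ i) 0)"

lemma funpow_eq_sum_displacements:
  assumes "i \<le> card (supp \<gamma>)"
  shows "(\<gamma> ^^ i) 0 = (\<Sum>j<i. displacements \<gamma> j)"
proof -
  have "(\<Sum>j<i. displacements \<gamma> j) = (\<Sum>j<i. (\<gamma> ^^ Suc j) 0 - (\<gamma> ^^ j) 0)"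
    using assms by (intro sum.cong) (auto simp: displacements_def)
  also have "\<dots> = (\<gamma> ^^ i) 0"
    by (subst sum_lessThan_telescope) simp
  finally show ?thesis by simp
qed

lemma displacements_inj:
  "inj_on (\<lambda>\<gamma>. (card (supp \<gamma>), displacements \<gamma>)) {\<gamma> \<in> cycles. 0 \<in> supp \<gamma>}"
proof
  fix \<gamma> \<gamma>' :: "int^'d \<Rightarrow> int^'d"
  assume \<gamma>: "\<gamma> \<in> {\<gamma> \<in> cycles. 0 \<in> supp \<gamma>}" and \<gamma>': "\<gamma>' \<in> {\<gamma> \<in> cycles. 0 \<in> supp \<gamma>}"
    and eq: "(card (supp \<gamma>), displacements \<gamma>) = (card (supp \<gamma>'), displacements \<gamma>')"
  have b: "bij_betw (\<lambda>i. (\<gamma> ^^ i) 0) {..<card (supp \<gamma>)} (supp \<gamma>)"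
    using \<gamma> cycle_orbit(3) by blast
  have b': "bij_betw (\<lambda>i. (\<gamma>' ^^ i) 0) {..<card (supp \<gamma>)} (supp \<gamma>')"
    using \<gamma>' cycle_orbit(3) eq by force
  have orbit: "(\<gamma> ^^ i) 0 = (\<gamma>' ^^ i) 0" if "i \<le> card (supp \<gamma>)" for i
    using that eq funpow_eq_sum_displacements[of i \<gamma>] funpow_eq_sum_displacements[of i \<gamma>'] by simp
  have supp: "supp \<gamma> = supp \<gamma>'"
    using b b' orbit by (auto simp: bij_betw_def image_def)
  show "\<gamma> = \<gamma>'"
  proof
    fix x
    show "\<gamma> x = \<gamma>' x"
    proof (cases "x \<in> supp \<gamma>")
      case True
      then obtain i where "i < card (supp \<gamma>)" "x = (\<gamma> ^^ i) 0"
        using b by (auto simp: bij_betw_def)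
      thus ?thesis using orbit[of i] orbit[of "Suc i"] by simp
    next
      case False
      hence "x \<notin> supp \<gamma>'" using supp by simp
      thus ?thesis using False by (simp add: supp_def)
    qed
  qed
qed

lemma cyc_weight_displacements:
  assumes "\<gamma> \<in> cycles" "0 \<in> supp \<gamma>"
  shows "cyc_weight V \<alpha> \<gamma> = (\<Prod>i<card (supp \<gamma>). expw \<alpha> (V (displacements \<gamma> i)))"
proof -
  have "cyc_weight V \<alpha> \<gamma> = (\<Prod>i<card (supp \<gamma>). expw \<alpha> (V (\<gamma> ((\<gamma> ^^ i) 0) - (\<gamma> ^^ i) 0)))"
    unfolding cyc_weight_def
    using prod.reindex_bij_betw[OF cycle_orbit(3)[OF assms], of "\<lambda>x. expw \<alpha> (V (\<gamma> x - x))"]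
    by simp
  also have "\<dots> = (\<Prod>i<card (supp \<gamma>). expw \<alpha> (V (displacements \<gamma> i)))"
    by (intro prod.cong) (auto simp: displacements_def)
  finally show ?thesis .
qed

lemma displacements_nonzero:
  assumes "\<gamma> \<in> cycles" "0 \<in> supp \<gamma>" "i < card (supp \<gamma>)"
  shows "displacements \<gamma> i \<noteq> 0"
proof -
  have "(\<gamma> ^^ i) 0 \<in> supp \<gamma>"
    using cycle_orbit(3)[OF assms(1,2)] assms(3) by (auto simp: bij_betw_def)
  thus ?thesis using assms(3) by (simp add: displacements_def supp_def)
qed

lemma sum_PiE_prod_eq_power:
  fixes g :: "'a \<Rightarrow> 'b::comm_semiring_1"
  assumes "finite G"
  shows "(\<Sum>j\<in>PiE {..<n} (\<lambda>_. G). \<Prod>i<n. g (j i)) = (sum g G) ^ n"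
  using prod_sum_PiE[of "{..<n}" "\<lambda>_. G" "\<lambda>_ y. g y"] assms by simp

lemma sum_cycles_le_moment_tail:
  fixes g :: "int^'d \<Rightarrow> real" and F :: "(int^'d \<Rightarrow> int^'d) set"
  assumes g_nonneg: "\<And>y. 0 \<le> g y"
    and g_le: "\<And>G. finite G \<Longrightarrow> G \<subseteq> -{0} \<Longrightarrow> sum g G \<le> r" and "r < 1"
    and F: "finite F" "F \<subseteq> {\<gamma> \<in> cycles. 0 \<in> supp \<gamma>}"
  shows "(\<Sum>\<gamma>\<in>F. real (card (supp \<gamma>)) * (\<Prod>i<card (supp \<gamma>). g (displacements \<gamma> i)))
           \<le> moment_tail r"
proof -
  define N where "N = Suc (\<Sum>\<gamma>\<in>F. card (supp \<gamma>))"
  define G where "G = (\<Union>\<gamma>\<in>F. displacements \<gamma> ` {..<card (supp \<gamma>)})"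
  define S where "S = Sigma {2..<N} (\<lambda>n. PiE {..<n} (\<lambda>_. G))"
  define \<Phi> where "\<Phi> \<gamma> = (card (supp \<gamma>), displacements \<gamma>)" for \<gamma> :: "int^'d \<Rightarrow> int^'d"
  define H where "H p = real (fst p) * (\<Prod>i<fst p. g (snd p i))" for p :: "nat \<times> (nat \<Rightarrow> int^'d)"
  have "finite G" using F by (simp add: G_def)
  have G: "G \<subseteq> -{0}" using F displacements_nonzero by (fastforce simp: G_def)
  have "0 \<le> r" using g_le[of "{}"] by simp
  have "\<Phi> ` F \<subseteq> S"
  proof
    fix p assume "p \<in> \<Phi> ` F"
    then obtain \<gamma> where \<gamma>: "\<gamma> \<in> F" "p = \<Phi> \<gamma>" by auto
    have "2 \<le> card (supp \<gamma>)" using \<gamma>(1) F cycle_orbit(2) by blast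
    moreover have "card (supp \<gamma>) < N"
      using \<gamma>(1) F(1) member_le_sum[of \<gamma> F "\<lambda>\<gamma>. card (supp \<gamma>)"] by (simp add: N_def)
    moreover have "displacements \<gamma> \<in> PiE {..<card (supp \<gamma>)} (\<lambda>_. G)"
      using \<gamma>(1) by (auto simp: G_def displacements_def)
    ultimately show "p \<in> S" using \<gamma>(2) by (simp add: S_def \<Phi>_def)
  qed
  have "inj_on \<Phi> F"
    using displacements_inj F(2) unfolding \<Phi>_def by (rule inj_on_subset)
  hence "(\<Sum>\<gamma>\<in>F. H (\<Phi> \<gamma>)) = (\<Sum>p\<in>\<Phi> ` F. H p)" by (simp add: sum.reindex)
  also have "\<dots> \<le> (\<Sum>p\<in>S. H p)"
    using \<open>\<Phi> ` F \<subseteq> S\<close> \<open>finite G\<close> g_nonneg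
    by (intro sum_mono2) (auto intro!: finite_PiE mult_nonneg_nonneg prod_nonneg simp: S_def H_def)
  also have "\<dots> = (\<Sum>n\<in>{2..<N}. \<Sum>j\<in>PiE {..<n} (\<lambda>_. G). H (n, j))"
    unfolding S_def using \<open>finite G\<close> by (subst sum.Sigma) (auto intro!: finite_PiE)
  also have "\<dots> = (\<Sum>n\<in>{2..<N}. real n * (sum g G) ^ n)"
    using \<open>finite G\<close> by (simp add: H_def sum_distrib_left[symmetric] sum_PiE_prod_eq_power)
  also have "\<dots> \<le> (\<Sum>n\<in>{2..<N}. real n * r ^ n)"
    using g_le[OF \<open>finite G\<close> G] g_nonneg
    by (intro sum_mono mult_left_mono power_mono) (auto intro: sum_nonneg)
  also have "\<dots> \<le> moment_tail r"
    using \<open>0 \<le> r\<close> \<open>r < 1\<close> by (rule sum_moment_le_moment_tail)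
  finally show ?thesis by (simp add: H_def \<Phi>_def)
qed

lemma expw_nonneg: "0 \<le> expw \<alpha> v"
  by (simp add: expw_def)

lemma expw_antimono:
  assumes "\<alpha> \<le> \<alpha>'"
  shows "expw \<alpha>' v \<le> expw \<alpha> v"
  using assms by (simp add: expw_def mult_right_mono)

lemma expw_strict_antimono:
  assumes "\<alpha> < \<alpha>'" "v \<noteq> \<infinity>" "v \<noteq> 0"
  shows "expw \<alpha>' v < expw \<alpha> v"
proof -
  have "0 < enn2real v"
    using assms(2,3) by (simp add: enn2real_positive_iff less_top zero_less_iff_neq_zero)
  thus ?thesis using assms by (simp add: expw_def mult_strict_right_mono)
qed

lemma sum_expw_le_rho:
  assumes "finite G" "G \<subseteq> -{0}"
  shows "ennreal (\<Sum>y\<in>G. expw \<alpha> (V y)) \<le> rho V \<alpha>"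
proof -
  have "ennreal (\<Sum>y\<in>G. expw \<alpha> (V y)) = (\<Sum>\<^sub>\<infinity>y\<in>G. ennreal (expw \<alpha> (V y)))"
    using assms(1) by (simp add: expw_nonneg)
  also have "\<dots> \<le> rho V \<alpha>"
    unfolding rho_def using assms(2)
    by (intro infsum_mono_neutral nonneg_summable_on_complete) auto
  finally show ?thesis .
qed

lemma beta_le_moment_tail:
  fixes V :: "int^'d \<Rightarrow> ennreal"
  assumes rho: "rho V \<alpha> = ennreal r" and "0 \<le> r" "r < 1"
  shows "beta V \<alpha> \<le> ennreal (moment_tail r)"
  unfolding beta_def
proof (intro infsum_le_finite_sums nonneg_summable_on_complete)
  fix F :: "(int^'d \<Rightarrow> int^'d) set"
  assume F: "finite F" "F \<subseteq> {\<gamma> \<in> cycles. 0 \<in> supp \<gamma>}"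
  have "(\<Sum>\<gamma>\<in>F. real (card (supp \<gamma>)) * cyc_weight V \<alpha> \<gamma>)
      = (\<Sum>\<gamma>\<in>F. real (card (supp \<gamma>)) * (\<Prod>i<card (supp \<gamma>). expw \<alpha> (V (displacements \<gamma> i))))"
    using F(2) by (intro sum.cong) (auto simp: cyc_weight_displacements)
  also have "\<dots> \<le> moment_tail r"
  proof (rule sum_cycles_le_moment_tail)
    show "sum (\<lambda>y. expw \<alpha> (V y)) G \<le> r" if "finite G" "G \<subseteq> -{0}" for G
      using sum_expw_le_rho[OF that, of \<alpha> V] rho \<open>0 \<le> r\<close> by simp
  qed (use F \<open>r < 1\<close> in \<open>simp_all add: expw_nonneg\<close>)
  finally show "(\<Sum>\<gamma>\<in>F. ennreal (real (card (supp \<gamma>)) * cyc_weight V \<alpha> \<gamma>)) \<le> ennreal (moment_tail r)"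
    by (simp add: cyc_weight_def prod_nonneg expw_nonneg ennreal_leI)
qed simp

lemma beta_less_1:
  assumes "rho V \<alpha> < ennreal rho0"
  shows "beta V \<alpha> < 1"
proof -
  obtain r where r: "rho V \<alpha> = ennreal r" "0 \<le> r" "r < rho0"
    using assms by (cases "rho V \<alpha>") (auto simp: ennreal_less_iff)
  have "beta V \<alpha> \<le> ennreal (moment_tail r)"
    using r rho0_props(2) by (intro beta_le_moment_tail) auto
  also have "\<dots> < 1"
    using moment_tail_less_1[OF r(2,3)] by (simp add: ennreal_less_iff)
  finally show ?thesis .
qed

lemma rho_antimono:
  assumes "\<alpha> \<le> \<alpha>'"
  shows "rho V \<alpha>' \<le> rho V \<alpha>"
  unfolding rho_def using assms
  by (intro infsum_mono nonneg_summable_on_complete ennreal_leI expw_antimono) auto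

lemma rho_strict_antimono:
  assumes "\<alpha> < \<alpha>'" and pos: "0 < rho V \<alpha>" and less_1: "rho V \<alpha> < 1"
  shows "rho V \<alpha>' < rho V \<alpha>"
proof -
  define t where "t a x = ennreal (expw a (V x))" for a x
  have summable: "t a summable_on A" for a A
    by (rule nonneg_summable_on_complete) simp
  have "\<exists>x0. x0 \<noteq> 0 \<and> t \<alpha> x0 \<noteq> 0"
  proof (rule ccontr)
    assume "\<nexists>x0. x0 \<noteq> 0 \<and> t \<alpha> x0 \<noteq> 0"
    hence "rho V \<alpha> = 0" unfolding rho_def t_def[symmetric] by (intro infsum_0) auto
    thus False using pos by simp
  qed
  then obtain x0 where x0: "x0 \<noteq> 0" "t \<alpha> x0 \<noteq> 0" by blast
  define A where "A = -{0} - {x0}"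
  have split: "rho V a = t a x0 + (\<Sum>\<^sub>\<infinity>x\<in>A. t a x)" for a
  proof -
    have "-{0} = {x0} \<union> A" using x0 by (auto simp: A_def)
    hence "rho V a = (\<Sum>\<^sub>\<infinity>x\<in>{x0} \<union> A. t a x)" by (simp only: rho_def t_def)
    also have "\<dots> = (\<Sum>\<^sub>\<infinity>x\<in>{x0}. t a x) + (\<Sum>\<^sub>\<infinity>x\<in>A. t a x)"
      by (rule infsum_Un_disjoint) (auto simp: summable A_def)
    finally show ?thesis by simp
  qed
  have finite: "V x0 \<noteq> \<infinity>" using x0(2) by (auto simp: t_def expw_def)
  have nonzero: "V x0 \<noteq> 0"
  proof
    assume "V x0 = 0"
    hence "1 \<le> rho V \<alpha>" unfolding split[of \<alpha>] by (simp add: t_def expw_def)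
    thus False using less_1 by simp
  qed
  have "(\<Sum>\<^sub>\<infinity>x\<in>A. t \<alpha> x) \<le> rho V \<alpha>" unfolding split[of \<alpha>] by simp
  hence tail_finite: "(\<Sum>\<^sub>\<infinity>x\<in>A. t \<alpha> x) \<noteq> \<infinity>" using less_1 by (auto simp: top_unique)
  have "rho V \<alpha>' \<le> t \<alpha>' x0 + (\<Sum>\<^sub>\<infinity>x\<in>A. t \<alpha> x)"
    unfolding split[of \<alpha>'] using assms(1)
    by (intro add_left_mono infsum_mono summable) (simp add: t_def ennreal_leI expw_antimono)
  also have "\<dots> < t \<alpha> x0 + (\<Sum>\<^sub>\<infinity>x\<in>A. t \<alpha> x)"
  proof -
    have "t \<alpha>' x0 < t \<alpha> x0"
      using expw_strict_antimono[OF assms(1) finite nonzero]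
      by (simp add: t_def ennreal_less_iff expw_nonneg)
    thus ?thesis using tail_finite by (simp add: ennreal_add_left_cancel_less add.commute)
  qed
  also have "\<dots> = rho V \<alpha>" by (rule split[symmetric])
  finally show ?thesis .
qed

lemma Inf_ereal_le_if_above:
  assumes "\<And>a'. a < a' \<Longrightarrow> a' \<in> S"
  shows "Inf (ereal ` S) \<le> ereal a"
proof (rule dense_ge)
  fix z assume "ereal a < z"
  thus "Inf (ereal ` S) \<le> z"
    using assms by (cases z) (auto intro: Inf_lower)
qed

lemma rho_less_rho0_above:
  assumes "rho V \<alpha> \<le> ennreal rho0" "\<alpha> < \<alpha>'"
  shows "rho V \<alpha>' < ennreal rho0"
proof (cases "rho V \<alpha> = 0")
  case True
  thus ?thesis using rho_antimono[of \<alpha> \<alpha>' V] assms rho0_props(1) by simp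
next
  case False
  have "rho V \<alpha> < 1"
    using assms(1) rho0_props(2) by (simp add: order_le_less_trans)
  hence "rho V \<alpha>' < rho V \<alpha>"
    using False by (intro rho_strict_antimono assms(2)) (simp_all add: zero_less_iff_neq_zero)
  thus ?thesis using assms(1) by simp
qed

theorem corollary5p2:
  fixes V :: "int^'d \<Rightarrow> ennreal"
  assumes "strictly_convex_pot V" and "V 0 = 0"
  shows "(\<forall>\<alpha>>0. rho V \<alpha> < ennreal rho0 \<longrightarrow> beta V \<alpha> < 1)
         \<and> alpha_star V \<le> Inf (ereal ` {\<alpha>. 0 < \<alpha> \<and> rho V \<alpha> \<le> ennreal rho0})"
proof (intro conjI allI impI)
  show "beta V \<alpha> < 1" if "rho V \<alpha> < ennreal rho0" for \<alpha>
    using that by (rule beta_less_1)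
  have "alpha_star V \<le> ereal \<alpha>" if "0 < \<alpha>" "rho V \<alpha> \<le> ennreal rho0" for \<alpha>
    unfolding alpha_star_def using that
    by (intro Inf_ereal_le_if_above) (auto intro: beta_less_1 rho_less_rho0_above)
  thus "alpha_star V \<le> Inf (ereal ` {\<alpha>. 0 < \<alpha> \<and> rho V \<alpha> \<le> ennreal rho0})"
    by (auto intro: Inf_greatest)
qed

end
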